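(* Let $(M,\phi,\xi,\eta,g)$ be a $(2n+1)$-dimensional almost contact metric manifold and $(\bar M,\bar J,\bar g)$ the corresponding almost Hermitian manifold on $M\times\mathbb R$. Then $\bar R(\bar X,\bar Y,\bar Z,\bar W)=\bar R(\bar X,\bar Y,\bar J\bar Z,\bar J\bar W)$ for all vector fields $\bar X,\bar Y,\bar Z,\bar W$ on $\bar M$ if and only if, for all indices $i,j,k,l$, $$R_{ijkl}-\phi_k{}^c\phi_l{}^dR_{ijcd}=g_{il}g_{jk}-g_{jl}g_{ik}-\phi_{il}\phi_{jk}+\phi_{jl}\phi_{ik}\quad\text{and}\quad \xi^c\phi_l{}^dR_{ijcd}=\eta_i\phi_{jl}-\eta_j\phi_{il}.$$
   Context: An almost contact metric manifold $(M,\phi,\xi,\eta,g)$ of dimension $2n+1$: $\phi$ a $(1,1)$-tensor, $\xi$ a vector field, $\eta$ a 1-form, $g$ a Riemannian metric with $\phi^2X=-X+\eta(X)\xi$, $\phi\xi=0$, $\eta\circ\phi=0$, $\eta(\xi)=1$, $g(\phi X,\phi Y)=g(X,Y)-\eta(X)\eta(Y)$, $\eta(X)=g(\xi,X)$. The corresponding almost Hermitian manifold is $\bar M=M\times\mathbb R$ with $\bar JX=\phi X-\eta(X)\partial_t$, $\bar J\partial_t=\xi$, $\bar g(X,Y)=e^{-2t}g(X,Y)$, $\bar g(\partial_t,\partial_t)=e^{-2t}$, $\bar g(X,\partial_t)=0$ for $X,Y$ tangent to $M$. Curvature conventions: $R(X,Y)Z=[\nabla_X,\nabla_Y]Z-\nabla_{[X,Y]}Z$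 for the Levi-Civita connection, $\bar R(\bar X,\bar Y,\bar Z,\bar W)=\bar g(\bar R(\bar X,\bar Y)\bar Z,\bar W)$, and in local coordinates on $M$, $R_{ijkl}=g(R(\partial_i,\partial_j)\partial_k,\partial_l)$, $\phi\partial_j=\phi_j{}^i\partial_i$, $\phi_{ij}=g_{aj}\phi_i{}^a$, $\eta_i=g_{ij}\xi^j$, with summation over repeated indices. *)

theory Defs
  imports "HOL-Analysis.Analysis"
begin

definition cpartial :: "'m::finite \<Rightarrow> (real^'m \<Rightarrow> real) \<Rightarrow> real^'m \<Rightarrow> real" where
  "cpartial i f p = deriv (\<lambda>t. f (p + t *\<^sub>R axis i 1)) 0"

fun cpartials :: "'m::finite list \<Rightarrow> (real^'m \<Rightarrow> real) \<Rightarrow> real^'m \<Rightarrow> real" where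
  "cpartials [] f = f"
| "cpartials (i # is) f = cpartial i (cpartials is f)"

definition smooth_on :: "(real^'m::finite) set \<Rightarrow> (real^'m \<Rightarrow> real) \<Rightarrow> bool" where
  "smooth_on U f \<longleftrightarrow> (\<forall>is. cpartials is f differentiable_on U)"

text \<open>A Riemannian metric in coordinates: G p i j = g(d_i, d_j) at p.\<close>
definition riem_metric_on :: "(real^'m::finite) set \<Rightarrow> (real^'m \<Rightarrow> 'm \<Rightarrow> 'm \<Rightarrow> real) \<Rightarrow> bool" where
  "riem_metric_on U G \<longleftrightarrow>
     (\<forall>i j. smooth_on U (\<lambda>p. G p i j)) \<and>
     (\<forall>p\<in>U. \<forall>i j. G p i j = G p j i) \<and>
     (\<forall>p\<in>U. \<forall>v::real^'m. v \<noteq> 0 \<longrightarrow> (\<Sum>i\<in>UNIV. \<Sum>j\<in>UNIV. v$i * v$j * G p i j) > 0)"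

definition ginv :: "(real^'m::finite \<Rightarrow> 'm \<Rightarrow> 'm \<Rightarrow> real) \<Rightarrow> real^'m \<Rightarrow> 'm \<Rightarrow> 'm \<Rightarrow> real" where
  "ginv G p i j = matrix_inv (\<chi> a b. G p a b) $ i $ j"

text \<open>Christoffel symbols of the Levi-Civita connection: nabla_{d_i} d_j = Gamma^k_{ij} d_k;
  christ G p i j k = Gamma^k_{ij}.\<close>
definition christ :: "(real^'m::finite \<Rightarrow> 'm \<Rightarrow> 'm \<Rightarrow> real) \<Rightarrow> real^'m \<Rightarrow> 'm \<Rightarrow> 'm \<Rightarrow> 'm \<Rightarrow> real" where
  "christ G p i j k = (1/2) * (\<Sum>l\<in>UNIV. ginv G p k l *
      (cpartial i (\<lambda>q. G q j l) p + cpartial j (\<lambda>q. G q i l) p - cpartial l (\<lambda>q. G q i j) p))"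

text \<open>R(d_i,d_j)d_k = [nabla_i,nabla_j] d_k = curv_up G p i j k l * d_l.\<close>
definition curv_up :: "(real^'m::finite \<Rightarrow> 'm \<Rightarrow> 'm \<Rightarrow> real) \<Rightarrow> real^'m \<Rightarrow> 'm \<Rightarrow> 'm \<Rightarrow> 'm \<Rightarrow> 'm \<Rightarrow> real" where
  "curv_up G p i j k l =
     cpartial i (\<lambda>q. christ G q j k l) p - cpartial j (\<lambda>q. christ G q i k l) p
     + (\<Sum>m\<in>UNIV. christ G p j k m * christ G p i m l - christ G p i k m * christ G p j m l)"

definition curv :: "(real^'m::finite \<Rightarrow> 'm \<Rightarrow> 'm \<Rightarrow> real) \<Rightarrow> real^'m \<Rightarrow> 'm \<Rightarrow> 'm \<Rightarrow> 'm \<Rightarrow> 'm \<Rightarrow> real" where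
  "curv G p i j k l = (\<Sum>m\<in>UNIV. curv_up G p i j k m * G p m l)"

definition curv4 :: "(real^'m::finite \<Rightarrow> 'm \<Rightarrow> 'm \<Rightarrow> real) \<Rightarrow> real^'m \<Rightarrow> real^'m \<Rightarrow> real^'m \<Rightarrow> real^'m \<Rightarrow> real^'m \<Rightarrow> real" where
  "curv4 G p X Y Z W = (\<Sum>a\<in>UNIV. \<Sum>b\<in>UNIV. \<Sum>c\<in>UNIV. \<Sum>d\<in>UNIV.
      X$a * Y$b * Z$c * W$d * curv G p a b c d)"

text \<open>Components: phi x j i = phi_j^i (phi d_j = phi_j^i d_i), xi x i = xi^i, eta x i = eta_i.\<close>
definition almost_contact_metric_on ::
  "(real^'n::finite) set \<Rightarrow> (real^'n \<Rightarrow> 'n \<Rightarrow> 'n \<Rightarrow> real) \<Rightarrow> (real^'n \<Rightarrow> 'n \<Rightarrow> real)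
   \<Rightarrow> (real^'n \<Rightarrow> 'n \<Rightarrow> real) \<Rightarrow> (real^'n \<Rightarrow> 'n \<Rightarrow> 'n \<Rightarrow> real) \<Rightarrow> bool" where
  "almost_contact_metric_on U phi xi eta g \<longleftrightarrow>
     riem_metric_on U g \<and>
     (\<forall>i j. smooth_on U (\<lambda>x. phi x j i)) \<and> (\<forall>i. smooth_on U (\<lambda>x. xi x i)) \<and>
     (\<forall>i. smooth_on U (\<lambda>x. eta x i)) \<and>
     (\<forall>x\<in>U.
        \<comment> \<open>phi^2 X = -X + eta(X) xi\<close>
        (\<forall>j i. (\<Sum>a\<in>UNIV. phi x j a * phi x a i) = - (if j = i then 1 else 0) + eta x j * xi x i) \<and>
        \<comment> \<open>phi xi = 0\<close>
        (\<forall>i. (\<Sum>j\<in>UNIV. xi x j * phi x j i) = 0) \<and>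
        \<comment> \<open>eta o phi = 0\<close>
        (\<forall>j. (\<Sum>i\<in>UNIV. phi x j i * eta x i) = 0) \<and>
        \<comment> \<open>eta(xi) = 1\<close>
        (\<Sum>i\<in>UNIV. eta x i * xi x i) = 1 \<and>
        \<comment> \<open>g(phi X, phi Y) = g(X,Y) - eta(X) eta(Y)\<close>
        (\<forall>i j. (\<Sum>a\<in>UNIV. \<Sum>b\<in>UNIV. phi x i a * phi x j b * g x a b) = g x i j - eta x i * eta x j) \<and>
        \<comment> \<open>eta(X) = g(xi, X)\<close>
        (\<forall>i. eta x i = (\<Sum>j\<in>UNIV. g x i j * xi x j)))"

text \<open>Coordinates on M x R: index Some i is the i-th coordinate of M, index None is t.\<close>
definition mpart :: "real^('n::finite option) \<Rightarrow> real^'n" where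
  "mpart q = (\<chi> i. q $ Some i)"

definition tpart :: "real^('n::finite option) \<Rightarrow> real" where
  "tpart q = q $ None"

definition prod_dom :: "(real^'n::finite) set \<Rightarrow> (real^('n option)) set" where
  "prod_dom U = {q. mpart q \<in> U}"

definition gbar :: "(real^'n::finite \<Rightarrow> 'n \<Rightarrow> 'n \<Rightarrow> real) \<Rightarrow> real^('n option) \<Rightarrow> 'n option \<Rightarrow> 'n option \<Rightarrow> real" where
  "gbar g q a b = exp (-2 * tpart q) *
     (case (a, b) of (Some i, Some j) \<Rightarrow> g (mpart q) i j
                   | (None, None) \<Rightarrow> 1
                   | _ \<Rightarrow> 0)"

text \<open>Jbar (X + f d_t) = phi X - eta(X) d_t + f xi.\<close>
definition Jbar :: "(real^'n::finite \<Rightarrow> 'n \<Rightarrow> 'n \<Rightarrow> real) \<Rightarrow> (real^'n \<Rightarrow> 'n \<Rightarrow> real)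
   \<Rightarrow> (real^'n \<Rightarrow> 'n \<Rightarrow> real) \<Rightarrow> real^('n option) \<Rightarrow> real^('n option) \<Rightarrow> real^('n option)" where
  "Jbar phi xi eta q v = (\<chi> a. case a of
       Some i \<Rightarrow> (\<Sum>j\<in>UNIV. v $ Some j * phi (mpart q) j i) + v $ None * xi (mpart q) i
     | None \<Rightarrow> - (\<Sum>j\<in>UNIV. v $ Some j * eta (mpart q) j))"

end

theory Submission
  imports Defs
begin

text \<open>
  The metric of \<open>M \<times> \<real>\<close> is \<open>e\<^sup>-\<^sup>2\<^sup>t h\<close> for the product metric \<open>h = g + dt\<^sup>2\<close>.  Its
  Christoffel symbols are those of \<open>g\<close> together with \<open>\<Gamma>\<^sup>t\<^sub>i\<^sub>j = g\<^sub>i\<^sub>j\<close>,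
  \<open>\<Gamma>\<^sup>k\<^sub>i\<^sub>t = \<Gamma>\<^sup>k\<^sub>t\<^sub>i = -\<delta>\<^sup>k\<^sub>i\<close> and \<open>\<Gamma>\<^sup>t\<^sub>t\<^sub>t = -1\<close> (\<open>christ_bar\<close>), and from them one computes that its
  curvature tensor is \<open>e\<^sup>-\<^sup>2\<^sup>t S\<close>, where \<open>S\<close> vanishes as soon as one argument is \<open>\<partial>/\<partial>t\<close> and equals
  \<open>R - R\<^sub>1\<close> on \<open>M\<close>, with \<open>R\<^sub>1(i,j,k,l) = g(i,l) g(j,k) - g(j,l) g(i,k)\<close> the curvature tensor of
  constant sectional curvature 1.  By multilinearity, invariance of the last two arguments under
  the almost complex structure is a condition on components, and splitting its matrix into
  \<open>M\<close>- and \<open>t\<close>-parts it says: \<open>S\<close> is \<open>\<phi>\<phi>\<close>-invariant and its \<open>\<phi>\<xi>\<close>-, \<open>\<xi>\<phi>\<close>- and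
  \<open>\<xi>\<xi>\<close>-contractions vanish.  Since \<open>\<phi>\<xi> = 0\<close>, the \<open>\<phi>\<xi>\<close>- and \<open>\<xi>\<xi>\<close>-conditions follow from
  \<open>\<phi>\<phi>\<close>-invariance; contracting \<open>R\<^sub>1\<close> with \<open>\<phi>\<close> and \<open>\<xi>\<close>, using \<open>\<phi>\<^sup>2 = -I + \<eta> \<otimes> \<xi>\<close>,
  the compatibility of \<open>g\<close> with \<open>\<phi>\<close> and the resulting skew-symmetry of \<open>\<phi>(i,j)\<close>, turns the
  remaining two conditions into the stated identities.
\<close>

type_synonym 'n coord_metric = "real^'n \<Rightarrow> 'n \<Rightarrow> 'n \<Rightarrow> real"

type_synonym 'a tensor4 = "'a \<Rightarrow> 'a \<Rightarrow> 'a \<Rightarrow> 'a \<Rightarrow> real"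

lemma sum_UNIV_option:
  "(\<Sum>a\<in>(UNIV::'n::finite option set). f a) = f None + (\<Sum>i\<in>UNIV. f (Some i))"
proof -
  have "(\<Sum>a\<in>(UNIV::'n option set). f a) = (\<Sum>a\<in>insert None (range Some). f a)"
    by (simp add: UNIV_option_conv)
  also have "\<dots> = f None + (\<Sum>i\<in>UNIV. f (Some i))"
    by (simp add: sum.reindex)
  finally show ?thesis .
qed

lemma if_zero_mult:
  "(if P then a else 0) * (y::real) = (if P then a * y else 0)"
  "(y::real) * (if P then a else 0) = (if P then y * a else 0)"
  by auto

lemma matrix_inv_unique:
  fixes A B :: "real^'k::finite^'k"
  assumes "A ** B = mat 1" "B ** A = mat 1"
  shows "matrix_inv A = B"
  unfolding matrix_inv_def
proof (rule some_equality)
  show "A ** B = mat 1 \<and> B ** A = mat 1" using assms by simp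
  fix C assume C: "A ** C = mat 1 \<and> C ** A = mat 1"
  have "C = C ** (A ** B)" using assms by (simp add: matrix_mul_rid)
  also have "\<dots> = (C ** A) ** B" by (simp add: matrix_mul_assoc)
  also have "\<dots> = B" using C by (simp add: matrix_mul_lid)
  finally show "C = B" .
qed

lemma eventually_line_in_open:
  fixes x v :: "'a::real_normed_vector"
  assumes "open U" "x \<in> U"
  shows "eventually (\<lambda>s::real. x + s *\<^sub>R v \<in> U) (nhds 0)"
proof -
  have "continuous_on UNIV (\<lambda>s::real. x + s *\<^sub>R v)"
    by (intro continuous_intros)
  then have "open ((\<lambda>s::real. x + s *\<^sub>R v) -` U)"
    using assms(1) by (simp add: continuous_on_open_vimage)
  moreover have "0 \<in> (\<lambda>s::real. x + s *\<^sub>R v) -` U" using assms by simp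
  ultimately show ?thesis
    by (rule eventually_nhds_in_open[THEN eventually_mono]) auto
qed

lemma cpartial_const: "cpartial i (\<lambda>x. c) p = 0"
  by (simp add: cpartial_def)

lemma cpartial_cong_on_open:
  assumes "open U" "p \<in> U" "\<And>y. y \<in> U \<Longrightarrow> f y = h y"
  shows "cpartial i f p = cpartial i h p"
  unfolding cpartial_def
  by (rule deriv_cong_ev[OF _ refl])
     (use eventually_line_in_open[OF assms(1,2), of "axis i 1"] assms(3) in \<open>auto elim: eventually_mono\<close>)

lemma cpartial_cmult:
  assumes "f differentiable at p"
  shows "cpartial i (\<lambda>x. c * f x) p = c * cpartial i f p"
proof -
  have "(f \<circ> (\<lambda>s::real. p + s *\<^sub>R axis i 1)) differentiable at 0"
    using assms by (intro differentiable_chain_at derivative_intros) simp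
  then obtain D where D: "((\<lambda>s. f (p + s *\<^sub>R axis i 1)) has_real_derivative D) (at 0)"
    using real_differentiable_def by (auto simp: o_def)
  then have "((\<lambda>s. c * f (p + s *\<^sub>R axis i 1)) has_real_derivative c * D) (at 0)"
    by (rule DERIV_cmult)
  then show ?thesis using D unfolding cpartial_def by (simp add: DERIV_imp_deriv)
qed

lemma mpart_add_axis_Some: "mpart (q + s *\<^sub>R axis (Some i) 1) = mpart q + s *\<^sub>R axis i (1::real)"
  by (simp add: mpart_def vec_eq_iff axis_def)

lemma tpart_add_axis_Some: "tpart (q + s *\<^sub>R axis (Some i) (1::real)) = tpart q"
  by (simp add: tpart_def axis_def)

lemma mpart_add_axis_None: "mpart (q + s *\<^sub>R axis None (1::real)) = mpart q"
  by (simp add: mpart_def vec_eq_iff axis_def)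

lemma tpart_add_axis_None: "tpart (q + s *\<^sub>R axis None (1::real)) = tpart q + s"
  by (simp add: tpart_def axis_def)

lemma ball_prod_dom_mpart: "(\<forall>q\<in>prod_dom U. P (mpart q)) \<longleftrightarrow> (\<forall>x\<in>U. P x)"
proof -
  have "mpart (\<chi> a. case a of Some i \<Rightarrow> x $ i | None \<Rightarrow> 0) = x" for x :: "real^'n::finite"
    by (simp add: mpart_def vec_eq_iff)
  then show ?thesis
    unfolding prod_dom_def by (metis mem_Collect_eq)
qed

section \<open>Curvature of the metric on \<open>M \<times> \<real>\<close>\<close>

definition cyl_metric :: "'n::finite coord_metric \<Rightarrow> real^'n \<Rightarrow> 'n option \<Rightarrow> 'n option \<Rightarrow> real" where
  "cyl_metric g x a b =
     (case (a, b) of (Some i, Some j) \<Rightarrow> g x i j | (None, None) \<Rightarrow> 1 | _ \<Rightarrow> 0)"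

definition cyl_metric_inv :: "'n::finite coord_metric \<Rightarrow> real^'n \<Rightarrow> 'n option \<Rightarrow> 'n option \<Rightarrow> real" where
  "cyl_metric_inv g x a b =
     (case (a, b) of (Some i, Some j) \<Rightarrow> ginv g x i j | (None, None) \<Rightarrow> 1 | _ \<Rightarrow> 0)"

lemma gbar_eq_cyl_metric: "gbar g q a b = exp (-2 * tpart q) * cyl_metric g (mpart q) a b"
  by (simp add: gbar_def cyl_metric_def)

lemma cpartial_Some_gbar:
  assumes "(\<lambda>x. cyl_metric g x a b) differentiable at (mpart q)"
  shows "cpartial (Some i) (\<lambda>q. gbar g q a b) q
    = exp (-2 * tpart q) * cpartial i (\<lambda>x. cyl_metric g x a b) (mpart q)"
proof -
  have "cpartial (Some i) (\<lambda>q. gbar g q a b) q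
      = cpartial i (\<lambda>x. exp (-2 * tpart q) * cyl_metric g x a b) (mpart q)"
    by (simp add: cpartial_def gbar_eq_cyl_metric mpart_add_axis_Some tpart_add_axis_Some)
  also have "\<dots> = exp (-2 * tpart q) * cpartial i (\<lambda>x. cyl_metric g x a b) (mpart q)"
    by (rule cpartial_cmult[OF assms])
  finally show ?thesis .
qed

lemma cpartial_None_gbar: "cpartial None (\<lambda>q. gbar g q a b) q = -2 * gbar g q a b"
proof -
  have "((\<lambda>s. exp (-2 * (tpart q + s)) * cyl_metric g (mpart q) a b) has_real_derivative
          (exp (-2 * tpart q) * (-2)) * cyl_metric g (mpart q) a b) (at 0)"
    by (rule derivative_eq_intros refl | simp)+
  then show ?thesis
    by (simp add: cpartial_def gbar_eq_cyl_metric mpart_add_axis_None tpart_add_axis_None DERIV_imp_deriv)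
qed

definition christ_bar ::
    "'n::finite coord_metric \<Rightarrow> real^'n \<Rightarrow> 'n option \<Rightarrow> 'n option \<Rightarrow> 'n option \<Rightarrow> real" where
  "christ_bar g x a b c = (case (a, b, c) of
      (Some i, Some j, Some k) \<Rightarrow> christ g x i j k
    | (Some i, Some j, None) \<Rightarrow> g x i j
    | (Some i, None, Some k) \<Rightarrow> (if k = i then -1 else 0)
    | (None, Some j, Some k) \<Rightarrow> (if k = j then -1 else 0)
    | (None, None, None) \<Rightarrow> -1
    | _ \<Rightarrow> 0)"

definition dchrist_bar :: "'n::finite coord_metric \<Rightarrow> real^'n \<Rightarrow> 'n option tensor4" where
  "dchrist_bar g x a b c d =
     (case a of Some i \<Rightarrow> cpartial i (\<lambda>y. christ_bar g y b c d) x | None \<Rightarrow> 0)"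

definition curv_up_bar :: "'n::finite coord_metric \<Rightarrow> real^'n \<Rightarrow> 'n option tensor4" where
  "curv_up_bar g x a b c d = dchrist_bar g x a b c d - dchrist_bar g x b a c d
     + (\<Sum>m\<in>UNIV. christ_bar g x b c m * christ_bar g x a m d
                  - christ_bar g x a c m * christ_bar g x b m d)"

lemma curv_up_bar_antisym: "curv_up_bar g x a b c d = - curv_up_bar g x b a c d"
  unfolding curv_up_bar_def by (simp add: sum_subtractf algebra_simps)

definition zero_ext :: "'n tensor4 \<Rightarrow> 'n option tensor4" where
  "zero_ext S a b c d =
     (case (a, b, c, d) of (Some i, Some j, Some k, Some l) \<Rightarrow> S i j k l | _ \<Rightarrow> 0)"

definition const_curv_tensor :: "('n \<Rightarrow> 'n \<Rightarrow> real) \<Rightarrow> 'n tensor4" where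
  "const_curv_tensor g i j k l = g i l * g j k - g j l * g i k"

definition curv_excess :: "'n tensor4 \<Rightarrow> ('n \<Rightarrow> 'n \<Rightarrow> real) \<Rightarrow> 'n tensor4" where
  "curv_excess R g i j k l = R i j k l - const_curv_tensor g i j k l"

locale riemannian_chart =
  fixes U :: "(real^'n::finite) set" and g :: "'n coord_metric"
  assumes open_U: "open U" and riem: "riem_metric_on U g"
begin

lemma g_sym: "x \<in> U \<Longrightarrow> g x i j = g x j i"
  using riem by (simp add: riem_metric_on_def)

lemma g_differentiable: "x \<in> U \<Longrightarrow> (\<lambda>x. g x i j) differentiable at x"
proof -
  assume x: "x \<in> U"
  have "smooth_on U (\<lambda>p. g p i j)" using riem by (simp add: riem_metric_on_def)
  then have "(\<lambda>p. g p i j) differentiable_on U"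
    unfolding smooth_on_def by (metis cpartials.simps(1))
  then show ?thesis using x open_U by (simp add: differentiable_on_eq_differentiable_at)
qed

lemma cyl_metric_differentiable: "x \<in> U \<Longrightarrow> (\<lambda>x. cyl_metric g x a b) differentiable at x"
  by (cases a; cases b) (auto simp: cyl_metric_def g_differentiable)

lemma cpartial_g_sym: "x \<in> U \<Longrightarrow> cpartial i (\<lambda>y. g y j k) x = cpartial i (\<lambda>y. g y k j) x"
  by (rule cpartial_cong_on_open[OF open_U]) (auto simp: g_sym)

lemma g_invertible:
  assumes x: "x \<in> U"
  shows "invertible (\<chi> i j. g x i j)"
proof -
  let ?A = "(\<chi> i j. g x i j) :: real^'n^'n"
  have "v = 0" if Av: "?A *v v = 0" for v :: "real^'n"
  proof -
    have "(\<Sum>i\<in>UNIV. \<Sum>j\<in>UNIV. v$i * v$j * g x i j) = (\<Sum>i\<in>UNIV. v$i * (?A *v v)$i)"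
      by (simp add: matrix_vector_mult_def sum_distrib_left mult_ac)
    also have "\<dots> = 0" using Av by simp
    finally show "v = 0" using riem x unfolding riem_metric_on_def by force
  qed
  then obtain B where B: "B ** ?A = mat 1" using matrix_left_invertible_ker by blast
  then have "?A ** B = mat 1" using matrix_left_right_inverse by blast
  with B show ?thesis unfolding invertible_def by blast
qed

lemma matrix_inv_g:
  assumes x: "x \<in> U"
  shows "(\<chi> i j. g x i j) ** matrix_inv (\<chi> i j. g x i j) = mat 1"
    and "matrix_inv (\<chi> i j. g x i j) ** (\<chi> i j. g x i j) = mat 1"
proof -
  have "\<exists>A'. (\<chi> i j. g x i j) ** A' = mat 1 \<and> A' ** (\<chi> i j. g x i j) = mat 1"
    using g_invertible[OF x] unfolding invertible_def by blast
  then have "(\<chi> i j. g x i j) ** matrix_inv (\<chi> i j. g x i j) = mat 1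
      \<and> matrix_inv (\<chi> i j. g x i j) ** (\<chi> i j. g x i j) = mat 1"
    unfolding matrix_inv_def by (rule someI_ex)
  then show "(\<chi> i j. g x i j) ** matrix_inv (\<chi> i j. g x i j) = mat 1"
    and "matrix_inv (\<chi> i j. g x i j) ** (\<chi> i j. g x i j) = mat 1" by auto
qed

lemma g_mult_ginv: "x \<in> U \<Longrightarrow> (\<Sum>k\<in>UNIV. g x i k * ginv g x k j) = (if i = j then 1 else 0)"
  using matrix_inv_g(1)[of x] unfolding ginv_def
  by (simp add: vec_eq_iff matrix_matrix_mult_def mat_def)

lemma ginv_mult_g: "x \<in> U \<Longrightarrow> (\<Sum>k\<in>UNIV. ginv g x i k * g x k j) = (if i = j then 1 else 0)"
  using matrix_inv_g(2)[of x] unfolding ginv_def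
  by (simp add: vec_eq_iff matrix_matrix_mult_def mat_def)

lemma ginv_gbar:
  assumes q: "mpart q \<in> U"
  shows "ginv (gbar g) q a b = exp (2 * tpart q) * cyl_metric_inv g (mpart q) a b"
proof -
  let ?x = "mpart q" and ?t = "tpart q"
  let ?M = "(\<chi> a b. gbar g q a b) :: real^'n option^'n option"
  let ?B = "(\<chi> a b. exp (2 * ?t) * cyl_metric_inv g ?x a b) :: real^'n option^'n option"
  have exp_cancel: "exp (- (2 * ?t)) * y * (exp (2 * ?t) * z) = y * z"
    "exp (2 * ?t) * y * (exp (- (2 * ?t)) * z) = y * z" for y z
    by (simp_all add: mult_ac flip: exp_add)
  have "(\<Sum>c\<in>UNIV. cyl_metric g ?x a c * cyl_metric_inv g ?x c b) = (if a = b then 1 else 0)" for a b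
    by (cases a; cases b) (simp_all add: sum_UNIV_option cyl_metric_def cyl_metric_inv_def g_mult_ginv[OF q])
  then have "?M ** ?B = mat 1"
    by (simp add: vec_eq_iff matrix_matrix_mult_def mat_def gbar_eq_cyl_metric exp_cancel)
  moreover have "(\<Sum>c\<in>UNIV. cyl_metric_inv g ?x a c * cyl_metric g ?x c b) = (if a = b then 1 else 0)" for a b
    by (cases a; cases b) (simp_all add: sum_UNIV_option cyl_metric_def cyl_metric_inv_def ginv_mult_g[OF q])
  then have "?B ** ?M = mat 1"
    by (simp add: vec_eq_iff matrix_matrix_mult_def mat_def gbar_eq_cyl_metric exp_cancel)
  ultimately have "matrix_inv ?M = ?B" by (rule matrix_inv_unique)
  then show ?thesis by (simp add: ginv_def)
qed

definition cyl_dmetric :: "real^'n \<Rightarrow> 'n option \<Rightarrow> 'n option \<Rightarrow> 'n option \<Rightarrow> real" where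
  "cyl_dmetric x a b l =
     (case a of Some i \<Rightarrow> cpartial i (\<lambda>x. cyl_metric g x b l) x | None \<Rightarrow> -2 * cyl_metric g x b l)"

lemma cpartial_gbar:
  assumes q: "mpart q \<in> U"
  shows "cpartial a (\<lambda>q. gbar g q b l) q = exp (-2 * tpart q) * cyl_dmetric (mpart q) a b l"
proof (cases a)
  case None
  have "cpartial None (\<lambda>q. gbar g q b l) q = -2 * gbar g q b l"
    by (rule cpartial_None_gbar)
  then show ?thesis by (simp add: None cyl_dmetric_def gbar_eq_cyl_metric)
next
  case (Some i)
  then show ?thesis
    using cpartial_Some_gbar[OF cyl_metric_differentiable[OF q]] by (simp add: cyl_dmetric_def)
qed

lemma christ_gbar_cyl:
  assumes q: "mpart q \<in> U"
  shows "christ (gbar g) q a b c = 1/2 * (\<Sum>l\<in>UNIV. cyl_metric_inv g (mpart q) c l *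
            (cyl_dmetric (mpart q) a b l + cyl_dmetric (mpart q) b a l - cyl_dmetric (mpart q) l a b))"
proof -
  let ?t = "tpart q"
  have "exp (2 * ?t) * y * (exp (-2 * ?t) * A + exp (-2 * ?t) * B - exp (-2 * ?t) * C) = y * (A + B - C)"
    for y A B C
  proof -
    have "exp (2 * ?t) * y * (exp (-2 * ?t) * A + exp (-2 * ?t) * B - exp (-2 * ?t) * C)
        = (exp (2 * ?t) * exp (-2 * ?t)) * (y * (A + B - C))" by (simp add: algebra_simps)
    then show ?thesis by (simp flip: exp_add)
  qed
  then show ?thesis
    unfolding christ_def ginv_gbar[OF q] cpartial_gbar[OF q] by (simp only:)
qed

lemma christ_gbar:
  assumes q: "mpart q \<in> U"
  shows "christ (gbar g) q a b c = christ_bar g (mpart q) a b c"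
proof -
  let ?x = "mpart q"
  have "(\<Sum>l\<in>UNIV. - (ginv g ?x k l * (2 * g ?x i l))) = (if k = i then -2 else 0)" for k i
  proof -
    have "(\<Sum>l\<in>UNIV. - (ginv g ?x k l * (2 * g ?x i l))) = -2 * (\<Sum>l\<in>UNIV. ginv g ?x k l * g ?x l i)"
      by (simp add: sum_distrib_left sum_negf mult_ac g_sym[OF q, of i])
    then show ?thesis using ginv_mult_g[OF q, of k i] by simp
  qed
  then show ?thesis
    unfolding christ_gbar_cyl[OF q]
    by (cases a; cases b; cases c)
      (simp_all add: sum_UNIV_option cyl_metric_def cyl_metric_inv_def cyl_dmetric_def christ_bar_def
        cpartial_const christ_def)
qed

lemma cpartial_christ_gbar:
  assumes q: "mpart q \<in> U"
  shows "cpartial a (\<lambda>q'. christ (gbar g) q' b c d) q = dchrist_bar g (mpart q) a b c d"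
proof (cases a)
  case None
  have "(\<lambda>s. christ (gbar g) (q + s *\<^sub>R axis None 1) b c d) = (\<lambda>s. christ_bar g (mpart q) b c d)"
    using q by (simp add: christ_gbar mpart_add_axis_None)
  then show ?thesis by (simp add: None cpartial_def dchrist_bar_def)
next
  case (Some i)
  have "eventually (\<lambda>s. christ (gbar g) (q + s *\<^sub>R axis (Some i) 1) b c d
      = christ_bar g (mpart q + s *\<^sub>R axis i 1) b c d) (nhds 0)"
    using eventually_line_in_open[OF open_U q, of "axis i 1"]
    by (auto elim!: eventually_mono simp: christ_gbar mpart_add_axis_Some)
  then show ?thesis unfolding Some cpartial_def dchrist_bar_def
    by (simp add: deriv_cong_ev)
qed

lemma curv_up_gbar:
  assumes q: "mpart q \<in> U"
  shows "curv_up (gbar g) q a b c d = curv_up_bar g (mpart q) a b c d"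
  unfolding curv_up_def curv_up_bar_def cpartial_christ_gbar[OF q] christ_gbar[OF q] ..

lemma christ_sym: assumes x: "x \<in> U" shows "christ g x i j k = christ g x j i k"
  unfolding christ_def by (simp add: cpartial_g_sym[OF x, of _ j i] add.commute)

lemma christ_lower:
  assumes x: "x \<in> U"
  shows "(\<Sum>m\<in>UNIV. christ g x a b m * g x m c) = 1/2 * (cpartial a (\<lambda>y. g y b c) x
           + cpartial b (\<lambda>y. g y a c) x - cpartial c (\<lambda>y. g y a b) x)"
proof -
  let ?P = "\<lambda>l. cpartial a (\<lambda>q. g q b l) x + cpartial b (\<lambda>q. g q a l) x
    - cpartial l (\<lambda>q. g q a b) x"
  have "(\<Sum>m\<in>UNIV. christ g x a b m * g x m c)
      = (\<Sum>m\<in>UNIV. \<Sum>l\<in>UNIV. 1/2 * (g x c m * ginv g x m l * ?P l))"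
    unfolding christ_def by (simp add: sum_distrib_left sum_distrib_right g_sym[OF x, of _ c] mult_ac)
  also have "\<dots> = (\<Sum>l\<in>UNIV. \<Sum>m\<in>UNIV. 1/2 * (g x c m * ginv g x m l * ?P l))"
    by (rule sum.swap)
  also have "\<dots> = 1/2 * (\<Sum>l\<in>UNIV. (\<Sum>m\<in>UNIV. g x c m * ginv g x m l) * ?P l)"
    by (simp add: sum_distrib_left sum_distrib_right)
  also have "\<dots> = 1/2 * ?P c"
    by (simp add: g_mult_ginv[OF x] if_zero_mult)
  finally show ?thesis .
qed

lemma curv_up_bar_Some:
  "curv_up_bar g x (Some i) (Some j) (Some k) (Some m)
   = curv_up g x i j k m - (if m = i then g x j k else 0) + (if m = j then g x i k else 0)"
  by (simp add: curv_up_bar_def dchrist_bar_def christ_bar_def sum_UNIV_option curv_up_def sum_subtractf)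

text \<open>This component equals \<open>(\<nabla>\<^sub>i g)(\<partial>\<^sub>j, \<partial>\<^sub>k) - (\<nabla>\<^sub>j g)(\<partial>\<^sub>i, \<partial>\<^sub>k)\<close>, which vanishes because the
  Levi-Civita connection is metric.\<close>

lemma curv_up_bar_Some_None:
  assumes x: "x \<in> U"
  shows "curv_up_bar g x (Some i) (Some j) (Some k) None = 0"
proof -
  have sums: "(\<Sum>m\<in>UNIV. christ g x j k m * g x i m) = (\<Sum>m\<in>UNIV. christ g x j k m * g x m i)"
    "(\<Sum>m\<in>UNIV. christ g x i k m * g x j m) = (\<Sum>m\<in>UNIV. christ g x i k m * g x m j)"
    by (simp_all add: g_sym[OF x])
  have derivs: "cpartial j (\<lambda>y. g y k i) x = cpartial j (\<lambda>y. g y i k) x"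
    "cpartial k (\<lambda>y. g y j i) x = cpartial k (\<lambda>y. g y i j) x"
    "cpartial i (\<lambda>y. g y k j) x = cpartial i (\<lambda>y. g y j k) x"
    by (simp_all add: cpartial_g_sym[OF x])
  show ?thesis
    by (simp add: curv_up_bar_def dchrist_bar_def christ_bar_def sum_UNIV_option sum_subtractf sums
        christ_lower[OF x] derivs) (simp add: field_simps)
qed

lemma curv_up_bar_None:
  assumes x: "x \<in> U" and "a = None \<or> b = None \<or> c = None \<or> d = None"
  shows "curv_up_bar g x a b c d = 0"
proof -
  have first_None: "curv_up_bar g x None b c d = 0" for b c d
  proof (cases b)
    case None
    then show ?thesis using curv_up_bar_antisym[of g x None None c d] by simp
  next
    case (Some j)
    then show ?thesis
      by (cases c; cases d) (simp_all add: curv_up_bar_def dchrist_bar_def christ_bar_def sum_UNIV_option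
          sum_subtractf cpartial_const if_zero_mult christ_sym[OF x] g_sym[OF x])
  qed
  have third_None: "curv_up_bar g x (Some i) (Some j) None d = 0" for i j d
    by (cases d) (simp_all add: curv_up_bar_def dchrist_bar_def christ_bar_def sum_UNIV_option
        sum_subtractf cpartial_const if_zero_mult christ_sym[OF x] g_sym[OF x])
  show ?thesis
    using assms(2) first_None third_None curv_up_bar_Some_None[OF x] curv_up_bar_antisym[of g x a None]
    by (cases a; cases b; cases c; cases d) auto
qed

lemma curv_gbar:
  assumes q: "mpart q \<in> U"
  shows "curv (gbar g) q a b c d
    = exp (-2 * tpart q) * zero_ext (curv_excess (curv g (mpart q)) (g (mpart q))) a b c d"
proof -
  let ?x = "mpart q"
  have "curv (gbar g) q a b c d
      = exp (-2 * tpart q) * (\<Sum>m\<in>UNIV. curv_up_bar g ?x a b c m * cyl_metric g ?x m d)"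
    unfolding curv_def curv_up_gbar[OF q] gbar_eq_cyl_metric by (simp add: sum_distrib_left mult_ac)
  also have "(\<Sum>m\<in>UNIV. curv_up_bar g ?x a b c m * cyl_metric g ?x m d)
      = zero_ext (curv_excess (curv g ?x) (g ?x)) a b c d"
  proof (cases "a = None \<or> b = None \<or> c = None \<or> d = None")
    case True
    then show ?thesis
      using curv_up_bar_None[OF q] by (auto simp: zero_ext_def sum_UNIV_option cyl_metric_def split: option.splits)
  next
    case False
    then obtain i j k l where abcd: "a = Some i" "b = Some j" "c = Some k" "d = Some l" by auto
    have "(\<Sum>m\<in>UNIV. curv_up_bar g ?x a b c (Some m) * g ?x m l)
        = (\<Sum>m\<in>UNIV. curv_up g ?x i j k m * g ?x m l) - g ?x i l * g ?x j k + g ?x j l * g ?x i k"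
      by (simp add: abcd curv_up_bar_Some algebra_simps sum_subtractf sum.distrib if_zero_mult)
    then show ?thesis
      using curv_up_bar_None[OF q]
      by (simp add: abcd sum_UNIV_option cyl_metric_def zero_ext_def curv_def curv_excess_def const_curv_tensor_def)
  qed
  finally show ?thesis .
qed

end

section \<open>Invariance under the almost complex structure\<close>

definition last_pair_invariant :: "('a::finite \<Rightarrow> 'a \<Rightarrow> real) \<Rightarrow> 'a tensor4 \<Rightarrow> bool" where
  "last_pair_invariant A T \<longleftrightarrow>
     (\<forall>a b c d. T a b c d = (\<Sum>e\<in>UNIV. \<Sum>f\<in>UNIV. A c e * A d f * T a b e f))"

lemma last_pair_invariant_cmult:
  assumes "k \<noteq> 0"
  shows "last_pair_invariant A (\<lambda>a b c d. k * T a b c d) \<longleftrightarrow> last_pair_invariant A T"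
proof -
  have "(\<Sum>e\<in>UNIV. \<Sum>f\<in>UNIV. A c e * A d f * (k * T a b e f))
      = k * (\<Sum>e\<in>UNIV. \<Sum>f\<in>UNIV. A c e * A d f * T a b e f)" for a b c d
    by (simp add: sum_distrib_left mult_ac)
  then show ?thesis
    using assms unfolding last_pair_invariant_def by simp
qed

lemma sum_axis_mult: "(\<Sum>a'\<in>UNIV. axis a (1::real) $ a' * f a') = f a"
  by (simp add: axis_def if_zero_mult)

lemma sum4_mult_nested:
  "(\<Sum>a\<in>A. \<Sum>b\<in>B. \<Sum>c\<in>C. \<Sum>d\<in>D. (x a::real) * y b * z c * w d * T a b c d)
   = (\<Sum>a\<in>A. x a * (\<Sum>b\<in>B. y b * (\<Sum>c\<in>C. z c * (\<Sum>d\<in>D. w d * T a b c d))))"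
  by (simp add: sum_distrib_left mult.assoc)

lemma sum_swap_pairs:
  "(\<Sum>c\<in>A. \<Sum>d\<in>B. \<Sum>c'\<in>C. \<Sum>d'\<in>D. F c d c' d')
    = (\<Sum>c'\<in>C. \<Sum>d'\<in>D. \<Sum>c\<in>A. \<Sum>d\<in>B. F c d c' d')"
proof -
  have "(\<Sum>c\<in>A. \<Sum>d\<in>B. \<Sum>c'\<in>C. \<Sum>d'\<in>D. F c d c' d')
      = (\<Sum>c\<in>A. \<Sum>c'\<in>C. \<Sum>d\<in>B. \<Sum>d'\<in>D. F c d c' d')"
    by (rule sum.cong[OF refl], rule sum.swap)
  also have "\<dots> = (\<Sum>c'\<in>C. \<Sum>c\<in>A. \<Sum>d\<in>B. \<Sum>d'\<in>D. F c d c' d')"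
    by (rule sum.swap)
  also have "\<dots> = (\<Sum>c'\<in>C. \<Sum>c\<in>A. \<Sum>d'\<in>D. \<Sum>d\<in>B. F c d c' d')"
    by (rule sum.cong[OF refl], rule sum.cong[OF refl], rule sum.swap)
  also have "\<dots> = (\<Sum>c'\<in>C. \<Sum>d'\<in>D. \<Sum>c\<in>A. \<Sum>d\<in>B. F c d c' d')"
    by (rule sum.cong[OF refl], rule sum.swap)
  finally show ?thesis .
qed

lemma quadrilinear_invariant_iff_last_pair_invariant:
  fixes T :: "'a::finite tensor4" and A :: "'a \<Rightarrow> 'a \<Rightarrow> real"
    and J :: "real^'a \<Rightarrow> real^'a"
  assumes J: "\<And>Z. J Z = (\<chi> e. \<Sum>c\<in>UNIV. Z$c * A c e)"
  shows "(\<forall>X Y Z W.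
      (\<Sum>a\<in>UNIV. \<Sum>b\<in>UNIV. \<Sum>c\<in>UNIV. \<Sum>d\<in>UNIV. X$a * Y$b * Z$c * W$d * T a b c d)
      = (\<Sum>a\<in>UNIV. \<Sum>b\<in>UNIV. \<Sum>c\<in>UNIV. \<Sum>d\<in>UNIV. X$a * Y$b * (J Z)$c * (J W)$d * T a b c d))
    \<longleftrightarrow> last_pair_invariant A T"
  unfolding last_pair_invariant_def
proof (intro iffI allI)
  fix a b c d
  assume "\<forall>X Y Z W.
      (\<Sum>a\<in>UNIV. \<Sum>b\<in>UNIV. \<Sum>c\<in>UNIV. \<Sum>d\<in>UNIV. X$a * Y$b * Z$c * W$d * T a b c d)
      = (\<Sum>a\<in>UNIV. \<Sum>b\<in>UNIV. \<Sum>c\<in>UNIV. \<Sum>d\<in>UNIV. X$a * Y$b * (J Z)$c * (J W)$d * T a b c d)"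
  then have "(\<Sum>a'\<in>UNIV. \<Sum>b'\<in>UNIV. \<Sum>c'\<in>UNIV. \<Sum>d'\<in>UNIV.
        axis a 1 $ a' * axis b 1 $ b' * axis c 1 $ c' * axis d 1 $ d' * T a' b' c' d')
     = (\<Sum>a'\<in>UNIV. \<Sum>b'\<in>UNIV. \<Sum>c'\<in>UNIV. \<Sum>d'\<in>UNIV.
        axis a 1 $ a' * axis b 1 $ b' * J (axis c 1) $ c' * J (axis d 1) $ d' * T a' b' c' d')"
    by blast
  moreover have "J (axis c 1) $ e = A c e" for c e
    by (simp add: J sum_axis_mult)
  ultimately show "T a b c d = (\<Sum>e\<in>UNIV. \<Sum>f\<in>UNIV. A c e * A d f * T a b e f)"
    by (simp only: sum4_mult_nested sum_axis_mult) (simp add: sum_distrib_left mult.assoc)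
next
  fix X Y Z W :: "real^'a"
  assume H: "\<forall>a b c d. T a b c d = (\<Sum>e\<in>UNIV. \<Sum>f\<in>UNIV. A c e * A d f * T a b e f)"
  have "(\<Sum>c\<in>UNIV. \<Sum>d\<in>UNIV. X$a * Y$b * (J Z)$c * (J W)$d * T a b c d)
      = (\<Sum>c\<in>UNIV. \<Sum>d\<in>UNIV. X$a * Y$b * Z$c * W$d * T a b c d)" for a b
  proof -
    have "(\<Sum>c\<in>UNIV. \<Sum>d\<in>UNIV. X$a * Y$b * (J Z)$c * (J W)$d * T a b c d)
        = (\<Sum>c\<in>UNIV. \<Sum>d\<in>UNIV. \<Sum>c'\<in>UNIV. \<Sum>d'\<in>UNIV.
             X$a * Y$b * Z$c' * W$d' * (A c' c * A d' d * T a b c d))"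
      by (simp add: J sum_distrib_left sum_distrib_right mult_ac)
    also have "\<dots> = (\<Sum>c'\<in>UNIV. \<Sum>d'\<in>UNIV. \<Sum>c\<in>UNIV. \<Sum>d\<in>UNIV.
             X$a * Y$b * Z$c' * W$d' * (A c' c * A d' d * T a b c d))"
      by (rule sum_swap_pairs)
    also have "\<dots> = (\<Sum>c'\<in>UNIV. \<Sum>d'\<in>UNIV.
             X$a * Y$b * Z$c' * W$d' * (\<Sum>c\<in>UNIV. \<Sum>d\<in>UNIV. A c' c * A d' d * T a b c d))"
      by (simp only: sum_distrib_left)
    also have "\<dots> = (\<Sum>c\<in>UNIV. \<Sum>d\<in>UNIV. X$a * Y$b * Z$c * W$d * T a b c d)"
      by (simp only: H[rule_format, symmetric])
    finally show ?thesis .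
  qed
  then show "(\<Sum>a\<in>UNIV. \<Sum>b\<in>UNIV. \<Sum>c\<in>UNIV. \<Sum>d\<in>UNIV. X$a * Y$b * Z$c * W$d * T a b c d)
      = (\<Sum>a\<in>UNIV. \<Sum>b\<in>UNIV. \<Sum>c\<in>UNIV. \<Sum>d\<in>UNIV. X$a * Y$b * (J Z)$c * (J W)$d * T a b c d)"
    by simp
qed

definition Jmatrix ::
    "('n \<Rightarrow> 'n \<Rightarrow> real) \<Rightarrow> ('n \<Rightarrow> real) \<Rightarrow> ('n \<Rightarrow> real) \<Rightarrow> 'n option \<Rightarrow> 'n option \<Rightarrow> real" where
  "Jmatrix phi xi eta c e = (case (c, e) of
       (Some j, Some i) \<Rightarrow> phi j i | (None, Some i) \<Rightarrow> xi i
     | (Some j, None) \<Rightarrow> - eta j | (None, None) \<Rightarrow> 0)"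

lemma Jbar_eq_Jmatrix:
  "Jbar phi xi eta q Z = (\<chi> e. \<Sum>c\<in>UNIV. Z$c * Jmatrix (phi (mpart q)) (xi (mpart q)) (eta (mpart q)) c e)"
  by (simp add: Jbar_def vec_eq_iff sum_UNIV_option Jmatrix_def sum_negf split: option.split)

lemma (in riemannian_chart) curv4_gbar_Jbar_invariant_iff:
  assumes q: "q \<in> prod_dom U"
  shows "(\<forall>X Y Z W.
        curv4 (gbar g) q X Y Z W = curv4 (gbar g) q X Y (Jbar phi xi eta q Z) (Jbar phi xi eta q W))
    \<longleftrightarrow> last_pair_invariant (Jmatrix (phi (mpart q)) (xi (mpart q)) (eta (mpart q)))
          (zero_ext (curv_excess (curv g (mpart q)) (g (mpart q))))"
proof -
  have "mpart q \<in> U" using q by (simp add: prod_dom_def)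
  then have "curv (gbar g) q = (\<lambda>a b c d. exp (-2 * tpart q)
      * zero_ext (curv_excess (curv g (mpart q)) (g (mpart q))) a b c d)"
    by (simp add: curv_gbar fun_eq_iff)
  moreover have "(\<forall>X Y Z W.
        curv4 (gbar g) q X Y Z W = curv4 (gbar g) q X Y (Jbar phi xi eta q Z) (Jbar phi xi eta q W))
      \<longleftrightarrow> last_pair_invariant (Jmatrix (phi (mpart q)) (xi (mpart q)) (eta (mpart q)))
            (curv (gbar g) q)"
    unfolding curv4_def by (rule quadrilinear_invariant_iff_last_pair_invariant) (rule Jbar_eq_Jmatrix)
  ultimately show ?thesis
    by (simp add: last_pair_invariant_cmult)
qed

lemma last_pair_invariant_Jmatrix_zero_ext_iff:
  fixes S :: "'n::finite tensor4"
  shows "last_pair_invariant (Jmatrix phi xi eta) (zero_ext S) \<longleftrightarrow>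
    (\<forall>i j k l. S i j k l = (\<Sum>c\<in>UNIV. \<Sum>d\<in>UNIV. phi k c * phi l d * S i j c d)
      \<and> (\<Sum>c\<in>UNIV. \<Sum>d\<in>UNIV. phi k c * xi d * S i j c d) = 0
      \<and> (\<Sum>c\<in>UNIV. \<Sum>d\<in>UNIV. xi c * phi l d * S i j c d) = 0
      \<and> (\<Sum>c\<in>UNIV. \<Sum>d\<in>UNIV. xi c * xi d * S i j c d) = 0)"
  unfolding last_pair_invariant_def
  by (simp add: split_option_all sum_UNIV_option zero_ext_def Jmatrix_def eq_commute[of 0] all_conj_distrib)
    blast

section \<open>Algebra of an almost contact metric structure\<close>

definition phi_lower :: "('n::finite \<Rightarrow> 'n \<Rightarrow> real) \<Rightarrow> ('n \<Rightarrow> 'n \<Rightarrow> real) \<Rightarrow> 'n \<Rightarrow> 'n \<Rightarrow> real" where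
  "phi_lower phi g i l = (\<Sum>a\<in>UNIV. g a l * phi i a)"

locale almost_contact_metric_algebra =
  fixes phi :: "'n::finite \<Rightarrow> 'n \<Rightarrow> real" and xi eta :: "'n \<Rightarrow> real"
    and g :: "'n \<Rightarrow> 'n \<Rightarrow> real"
  assumes phi_square: "\<And>j i. (\<Sum>a\<in>UNIV. phi j a * phi a i) = - (if j = i then 1 else 0) + eta j * xi i"
    and phi_xi: "\<And>i. (\<Sum>j\<in>UNIV. xi j * phi j i) = 0"
    and eta_phi: "\<And>j. (\<Sum>i\<in>UNIV. phi j i * eta i) = 0"
    and g_phi_phi: "\<And>i j. (\<Sum>a\<in>UNIV. \<Sum>b\<in>UNIV. phi i a * phi j b * g a b) = g i j - eta i * eta j"
    and eta_eq: "\<And>i. eta i = (\<Sum>j\<in>UNIV. g i j * xi j)"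
    and g_sym: "\<And>i j. g i j = g j i"
begin

text \<open>Both sides arise from evaluating \<open>g(\<phi> \<partial>\<^sub>i, \<phi>\<^sup>2 \<partial>\<^sub>l)\<close>, once with
  \<open>\<phi>\<^sup>2 = -I + \<eta> \<otimes> \<xi>\<close> and once with the compatibility of \<open>g\<close> with \<open>\<phi>\<close>.\<close>

lemma phi_lower_antisym: "phi_lower phi g l i = - phi_lower phi g i l"
proof -
  let ?L = "\<Sum>a\<in>UNIV. \<Sum>b\<in>UNIV. phi i a * (\<Sum>m\<in>UNIV. phi l m * phi m b) * g a b"
  have "(\<Sum>b\<in>UNIV. phi i a * (- (if l = b then 1 else 0) + eta l * xi b) * g a b)
      = - (phi i a * g a l) + eta l * (phi i a * eta a)" for a
  proof -
    have "(\<Sum>b\<in>UNIV. phi i a * (- (if l = b then 1 else 0) + eta l * xi b) * g a b)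
        = (\<Sum>b\<in>UNIV. - (if l = b then phi i a * g a b else 0) + eta l * (phi i a * (g a b * xi b)))"
      by (intro sum.cong refl) (simp add: algebra_simps)
    then show ?thesis
      by (simp add: sum_subtractf sum_distrib_left[symmetric] eta_eq[of a, symmetric])
  qed
  then have "?L = - (\<Sum>a\<in>UNIV. phi i a * g a l) + eta l * (\<Sum>a\<in>UNIV. phi i a * eta a)"
    by (simp add: phi_square sum_subtractf sum_distrib_left mult.assoc)
  then have L: "?L = - phi_lower phi g i l"
    unfolding eta_phi phi_lower_def by (simp add: mult.commute)
  have "?L = (\<Sum>a\<in>UNIV. \<Sum>b\<in>UNIV. \<Sum>m\<in>UNIV. phi l m * (phi i a * phi m b * g a b))"
    by (simp add: sum_distrib_left sum_distrib_right mult_ac)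
  also have "\<dots> = (\<Sum>a\<in>UNIV. \<Sum>m\<in>UNIV. \<Sum>b\<in>UNIV. phi l m * (phi i a * phi m b * g a b))"
    by (rule sum.cong[OF refl], rule sum.swap)
  also have "\<dots> = (\<Sum>m\<in>UNIV. \<Sum>a\<in>UNIV. \<Sum>b\<in>UNIV. phi l m * (phi i a * phi m b * g a b))"
    by (rule sum.swap)
  also have "\<dots> = (\<Sum>m\<in>UNIV. phi l m * (g i m - eta i * eta m))"
    by (simp add: sum_distrib_left[symmetric] g_phi_phi)
  also have "\<dots> = (\<Sum>m\<in>UNIV. phi l m * g i m) - eta i * (\<Sum>m\<in>UNIV. phi l m * eta m)"
    by (simp add: right_diff_distrib sum_subtractf sum_distrib_left mult_ac)
  also have "\<dots> = phi_lower phi g l i"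
    unfolding eta_phi phi_lower_def by (simp add: g_sym mult.commute)
  finally show ?thesis using L by simp
qed

lemma sum_g_phi: "(\<Sum>c\<in>UNIV. g j c * phi k c) = phi_lower phi g k j"
  unfolding phi_lower_def by (intro sum.cong refl) (simp add: g_sym)

lemma phi_phi_contract_const_curv:
  "(\<Sum>c\<in>UNIV. \<Sum>d\<in>UNIV. phi k c * phi l d * const_curv_tensor g i j c d)
   = phi_lower phi g i l * phi_lower phi g j k - phi_lower phi g j l * phi_lower phi g i k"
proof -
  have "(\<Sum>c\<in>UNIV. \<Sum>d\<in>UNIV. phi k c * phi l d * const_curv_tensor g i j c d)
     = (\<Sum>c\<in>UNIV. \<Sum>d\<in>UNIV. (g j c * phi k c) * (g i d * phi l d))
       - (\<Sum>c\<in>UNIV. \<Sum>d\<in>UNIV. (g i c * phi k c) * (g j d * phi l d))"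
    by (simp add: const_curv_tensor_def sum_subtractf algebra_simps)
  also have "\<dots> = (\<Sum>c\<in>UNIV. g j c * phi k c) * (\<Sum>d\<in>UNIV. g i d * phi l d)
       - (\<Sum>c\<in>UNIV. g i c * phi k c) * (\<Sum>d\<in>UNIV. g j d * phi l d)"
    by (simp only: sum_product)
  finally show ?thesis
    using phi_lower_antisym[of l i] phi_lower_antisym[of k j] phi_lower_antisym[of l j]
      phi_lower_antisym[of k i]
    by (simp add: sum_g_phi)
qed

lemma xi_phi_contract_const_curv:
  "(\<Sum>c\<in>UNIV. \<Sum>d\<in>UNIV. xi c * phi l d * const_curv_tensor g i j c d)
   = eta i * phi_lower phi g j l - eta j * phi_lower phi g i l"
proof -
  have "(\<Sum>c\<in>UNIV. \<Sum>d\<in>UNIV. xi c * phi l d * const_curv_tensor g i j c d)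
     = (\<Sum>c\<in>UNIV. \<Sum>d\<in>UNIV. (g j c * xi c) * (g i d * phi l d))
       - (\<Sum>c\<in>UNIV. \<Sum>d\<in>UNIV. (g i c * xi c) * (g j d * phi l d))"
    by (simp add: const_curv_tensor_def sum_subtractf algebra_simps)
  also have "\<dots> = (\<Sum>c\<in>UNIV. g j c * xi c) * (\<Sum>d\<in>UNIV. g i d * phi l d)
       - (\<Sum>c\<in>UNIV. g i c * xi c) * (\<Sum>d\<in>UNIV. g j d * phi l d)"
    by (simp only: sum_product)
  also have "\<dots> = eta j * phi_lower phi g l i - eta i * phi_lower phi g l j"
    by (simp add: sum_g_phi eta_eq[symmetric])
  finally show ?thesis
    using phi_lower_antisym[of l i] phi_lower_antisym[of l j] by (simp add: algebra_simps)
qed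

lemma xi_contract_phi_invariant:
  fixes S :: "'n \<Rightarrow> 'n \<Rightarrow> real"
  assumes S: "\<And>k l. S k l = (\<Sum>c\<in>UNIV. \<Sum>d\<in>UNIV. phi k c * phi l d * S c d)"
  shows "(\<Sum>f\<in>UNIV. xi f * S k f) = 0"
proof -
  have "(\<Sum>f\<in>UNIV. xi f * S k f)
      = (\<Sum>f\<in>UNIV. \<Sum>c\<in>UNIV. \<Sum>d\<in>UNIV. phi k c * S c d * (xi f * phi f d))"
    by (subst S) (simp add: sum_distrib_left mult_ac)
  also have "\<dots> = (\<Sum>c\<in>UNIV. \<Sum>f\<in>UNIV. \<Sum>d\<in>UNIV. phi k c * S c d * (xi f * phi f d))"
    by (rule sum.swap)
  also have "\<dots> = (\<Sum>c\<in>UNIV. \<Sum>d\<in>UNIV. \<Sum>f\<in>UNIV. phi k c * S c d * (xi f * phi f d))"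
    by (rule sum.cong[OF refl], rule sum.swap)
  also have "\<dots> = (\<Sum>c\<in>UNIV. \<Sum>d\<in>UNIV. phi k c * S c d * (\<Sum>f\<in>UNIV. xi f * phi f d))"
    by (simp only: sum_distrib_left)
  also have "\<dots> = 0"
    by (simp add: phi_xi)
  finally show ?thesis .
qed

lemma contract_xi_last_vanish:
  fixes S :: "'n \<Rightarrow> 'n \<Rightarrow> real"
  assumes "\<And>k l. S k l = (\<Sum>c\<in>UNIV. \<Sum>d\<in>UNIV. phi k c * phi l d * S c d)"
  shows "(\<Sum>c\<in>UNIV. \<Sum>d\<in>UNIV. A c * xi d * S c d) = 0"
proof -
  have "(\<Sum>c\<in>UNIV. \<Sum>d\<in>UNIV. A c * xi d * S c d) = (\<Sum>c\<in>UNIV. A c * (\<Sum>d\<in>UNIV. xi d * S c d))"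
    by (simp add: sum_distrib_left mult.assoc)
  then show ?thesis
    using xi_contract_phi_invariant[OF assms] by simp
qed

lemma curv_excess_phi_phi_invariant_iff:
  "curv_excess R g i j k l = (\<Sum>c\<in>UNIV. \<Sum>d\<in>UNIV. phi k c * phi l d * curv_excess R g i j c d)
   \<longleftrightarrow> R i j k l - (\<Sum>c\<in>UNIV. \<Sum>d\<in>UNIV. phi k c * phi l d * R i j c d)
       = g i l * g j k - g j l * g i k
         - phi_lower phi g i l * phi_lower phi g j k + phi_lower phi g j l * phi_lower phi g i k"
proof -
  have "(\<Sum>c\<in>UNIV. \<Sum>d\<in>UNIV. phi k c * phi l d * curv_excess R g i j c d)
      = (\<Sum>c\<in>UNIV. \<Sum>d\<in>UNIV. phi k c * phi l d * R i j c d)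
        - (phi_lower phi g i l * phi_lower phi g j k - phi_lower phi g j l * phi_lower phi g i k)"
    by (simp add: curv_excess_def right_diff_distrib sum_subtractf phi_phi_contract_const_curv)
  then show ?thesis by (auto simp: curv_excess_def const_curv_tensor_def)
qed

lemma curv_excess_xi_phi_vanish_iff:
  "(\<Sum>c\<in>UNIV. \<Sum>d\<in>UNIV. xi c * phi l d * curv_excess R g i j c d) = 0
   \<longleftrightarrow> (\<Sum>c\<in>UNIV. \<Sum>d\<in>UNIV. xi c * phi l d * R i j c d)
       = eta i * phi_lower phi g j l - eta j * phi_lower phi g i l"
proof -
  have "(\<Sum>c\<in>UNIV. \<Sum>d\<in>UNIV. xi c * phi l d * curv_excess R g i j c d)
      = (\<Sum>c\<in>UNIV. \<Sum>d\<in>UNIV. xi c * phi l d * R i j c d)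
        - (eta i * phi_lower phi g j l - eta j * phi_lower phi g i l)"
    by (simp add: curv_excess_def right_diff_distrib sum_subtractf xi_phi_contract_const_curv)
  then show ?thesis by auto
qed

lemma Jmatrix_invariant_curv_iff:
  fixes R :: "'n tensor4"
  shows "last_pair_invariant (Jmatrix phi xi eta) (zero_ext (curv_excess R g))
    \<longleftrightarrow> (\<forall>i j k l. R i j k l - (\<Sum>c\<in>UNIV. \<Sum>d\<in>UNIV. phi k c * phi l d * R i j c d)
          = g i l * g j k - g j l * g i k
            - phi_lower phi g i l * phi_lower phi g j k + phi_lower phi g j l * phi_lower phi g i k
        \<and> (\<Sum>c\<in>UNIV. \<Sum>d\<in>UNIV. xi c * phi l d * R i j c d)
          = eta i * phi_lower phi g j l - eta j * phi_lower phi g i l)"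
proof -
  have xi_vanish: "(\<Sum>c\<in>UNIV. \<Sum>d\<in>UNIV. A c * xi d * curv_excess R g i j c d) = 0"
    if "\<forall>k l. curv_excess R g i j k l
      = (\<Sum>c\<in>UNIV. \<Sum>d\<in>UNIV. phi k c * phi l d * curv_excess R g i j c d)" for A i j
    using that by (intro contract_xi_last_vanish) blast
  show ?thesis
    unfolding last_pair_invariant_Jmatrix_zero_ext_iff
      curv_excess_phi_phi_invariant_iff[symmetric] curv_excess_xi_phi_vanish_iff[symmetric]
    using xi_vanish by blast
qed

end

theorem lemma1:
  fixes U :: "(real^'n::finite) set" and n :: nat
    and phi :: "real^'n \<Rightarrow> 'n \<Rightarrow> 'n \<Rightarrow> real"
    and xi :: "real^'n \<Rightarrow> 'n \<Rightarrow> real" and eta :: "real^'n \<Rightarrow> 'n \<Rightarrow> real"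
    and g :: "real^'n \<Rightarrow> 'n \<Rightarrow> 'n \<Rightarrow> real"
  assumes "open U"
    and "CARD('n) = 2 * n + 1"
    and "almost_contact_metric_on U phi xi eta g"
  shows "(\<forall>q\<in>prod_dom U. \<forall>X Y Z W.
            curv4 (gbar g) q X Y Z W = curv4 (gbar g) q X Y (Jbar phi xi eta q Z) (Jbar phi xi eta q W))
     \<longleftrightarrow>
     (\<forall>x\<in>U. \<forall>i j k l.
        curv g x i j k l - (\<Sum>c\<in>UNIV. \<Sum>d\<in>UNIV. phi x k c * phi x l d * curv g x i j c d)
          = g x i l * g x j k - g x j l * g x i k
            - (\<Sum>a\<in>UNIV. g x a l * phi x i a) * (\<Sum>a\<in>UNIV. g x a k * phi x j a)
            + (\<Sum>a\<in>UNIV. g x a l * phi x j a) * (\<Sum>a\<in>UNIV. g x a k * phi x i a)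
        \<and> (\<Sum>c\<in>UNIV. \<Sum>d\<in>UNIV. xi x c * phi x l d * curv g x i j c d)
          = eta x i * (\<Sum>a\<in>UNIV. g x a l * phi x j a) - eta x j * (\<Sum>a\<in>UNIV. g x a l * phi x i a))"
proof -
  interpret riemannian_chart U g
    using assms(1,3) by unfold_locales (simp_all add: almost_contact_metric_on_def)
  have acm: "almost_contact_metric_algebra (phi x) (xi x) (eta x) (g x)" if "x \<in> U" for x
    using assms(3) that g_sym unfolding almost_contact_metric_on_def by unfold_locales blast+
  let ?invariant = "\<lambda>x. last_pair_invariant (Jmatrix (phi x) (xi x) (eta x))
    (zero_ext (curv_excess (curv g x) (g x)))"
  have reduce_to_U: "(\<forall>q\<in>prod_dom U. \<forall>X Y Z W.
            curv4 (gbar g) q X Y Z W = curv4 (gbar g) q X Y (Jbar phi xi eta q Z) (Jbar phi xi eta q W))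
      \<longleftrightarrow> (\<forall>x\<in>U. ?invariant x)"
    using curv4_gbar_Jbar_invariant_iff ball_prod_dom_mpart[of U ?invariant] by simp
  show ?thesis
    unfolding reduce_to_U
    by (intro ball_cong refl almost_contact_metric_algebra.Jmatrix_invariant_curv_iff
        [OF acm, unfolded phi_lower_def])
qed

end
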